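(* Let $q$ be a prime power and $m$ a positive integer. For $i\in\{1,2\}$ let $V_i=\mathbb F_{q^m}^{k_i}$ and let $U_i\subseteq V_i$ be a cutting $[n_i,k_i]_{q^m/q}$ system which is $(k_i-1,\,n_i-m-1+t_i)_q$-evasive, where $t_1,t_2\ge 0$ are integers with $t_1+t_2<m+2$. Then $U_1\oplus U_2\subseteq V_1\oplus V_2$ is a cutting $[n_1+n_2,\,k_1+k_2]_{q^m/q}$ system.
   Context: An $[n,k]_{q^m/q}$ system is an $\mathbb F_q$-subspace $U$ of $\mathbb F_{q^m}^k$ with $\dim_{\mathbb F_q}(U)=n$ and $\langle U\rangle_{\mathbb F_{q^m}}=\mathbb F_{q^m}^k$. It is cutting if for every $\mathbb F_{q^m}$-hyperplane $H$ one has $\langle H\cap U\rangle_{\mathbb F_{q^m}}=H$. It is $(h,r)_q$-evasive if $\dim_{\mathbb F_q}(U\cap H)\le r$ for every $h$-dimensional $\mathbb F_{q^m}$-subspace $H$. *)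

theory Defs
  imports "HOL-Computational_Algebra.Primes"
begin

text \<open>Ambient field: a finite field type 'a (playing the role of F_{q^m}).
  Vectors of F^k are modelled as functions nat => 'a vanishing outside {0..<k}.
  Linear-algebra notions are parameterised by a set C of scalars:
  C = UNIV gives F_{q^m}-linear notions, C = K (a subfield) gives F_q-linear ones.\<close>

definition is_subfield :: "'a::field set \<Rightarrow> bool" where
  "is_subfield K \<longleftrightarrow> 0 \<in> K \<and> 1 \<in> K \<and> (\<forall>x\<in>K. \<forall>y\<in>K. x + y \<in> K \<and> x * y \<in> K)
     \<and> (\<forall>x\<in>K. - x \<in> K) \<and> (\<forall>x\<in>K. x \<noteq> 0 \<longrightarrow> inverse x \<in> K)"

definition vecs :: "nat \<Rightarrow> (nat \<Rightarrow> 'a::field) set" where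
  "vecs k = {v. \<forall>i\<ge>k. v i = 0}"

definition span_over :: "'a::field set \<Rightarrow> (nat \<Rightarrow> 'a) set \<Rightarrow> (nat \<Rightarrow> 'a) set" where
  "span_over C S = {v. \<exists>T c. finite T \<and> T \<subseteq> S \<and> (\<forall>w\<in>T. c w \<in> C)
                         \<and> v = (\<lambda>i. \<Sum>w\<in>T. c w * w i)}"

definition indep_over :: "'a::field set \<Rightarrow> (nat \<Rightarrow> 'a) set \<Rightarrow> bool" where
  "indep_over C B \<longleftrightarrow> finite B \<and> (\<forall>c. (\<forall>w\<in>B. c w \<in> C) \<and> (\<lambda>i. \<Sum>w\<in>B. c w * w i) = (\<lambda>i. 0)
                         \<longrightarrow> (\<forall>w\<in>B. c w = 0))"

definition subspace_over :: "'a::field set \<Rightarrow> nat \<Rightarrow> (nat \<Rightarrow> 'a) set \<Rightarrow> bool" where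
  "subspace_over C k W \<longleftrightarrow> W \<subseteq> vecs k \<and> (\<lambda>i. 0) \<in> W
     \<and> (\<forall>u\<in>W. \<forall>v\<in>W. (\<lambda>i. u i + v i) \<in> W) \<and> (\<forall>a\<in>C. \<forall>u\<in>W. (\<lambda>i. a * u i) \<in> W)"

definition has_dim_over :: "'a::field set \<Rightarrow> (nat \<Rightarrow> 'a) set \<Rightarrow> nat \<Rightarrow> bool" where
  "has_dim_over C W d \<longleftrightarrow> (\<exists>B. B \<subseteq> W \<and> indep_over C B \<and> span_over C B = W \<and> card B = d)"

definition dim_over :: "'a::field set \<Rightarrow> (nat \<Rightarrow> 'a) set \<Rightarrow> nat" where
  "dim_over C W = (LEAST d. has_dim_over C W d)"

definition is_system :: "'a::field set \<Rightarrow> nat \<Rightarrow> nat \<Rightarrow> (nat \<Rightarrow> 'a) set \<Rightarrow> bool" where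
  "is_system K n k U \<longleftrightarrow> subspace_over K k U \<and> has_dim_over K U n \<and> span_over UNIV U = vecs k"

definition is_hyperplane :: "nat \<Rightarrow> (nat \<Rightarrow> 'a::field) set \<Rightarrow> bool" where
  "is_hyperplane k H \<longleftrightarrow> subspace_over UNIV k H \<and> (\<exists>d. has_dim_over UNIV H d \<and> int d = int k - 1)"

definition is_cutting :: "nat \<Rightarrow> (nat \<Rightarrow> 'a::field) set \<Rightarrow> bool" where
  "is_cutting k U \<longleftrightarrow> (\<forall>H. is_hyperplane k H \<longrightarrow> span_over UNIV (H \<inter> U) = H)"

definition is_evasive :: "'a::field set \<Rightarrow> nat \<Rightarrow> int \<Rightarrow> int \<Rightarrow> (nat \<Rightarrow> 'a) set \<Rightarrow> bool" where
  "is_evasive K k h r U \<longleftrightarrow> (\<forall>H d. subspace_over UNIV k H \<and> has_dim_over UNIV H d \<and> int d = h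
       \<longrightarrow> int (dim_over K (U \<inter> H)) \<le> r)"

definition direct_sum :: "nat \<Rightarrow> (nat \<Rightarrow> 'a::field) set \<Rightarrow> (nat \<Rightarrow> 'a) set \<Rightarrow> (nat \<Rightarrow> 'a) set" where
  "direct_sum k1 U1 U2 = {(\<lambda>i. if i < k1 then u1 i else u2 (i - k1)) | u1 u2. u1 \<in> U1 \<and> u2 \<in> U2}"

end

theory Submission
  imports Defs "HOL-Library.Function_Algebras" "HOL-Library.FuncSet"
begin

text \<open>
  A hyperplane H of V1 (+) V2 is the kernel of a linear form \<phi>(h1, h2) = \<phi>1 h1 + \<phi>2 h2.
  As Ui is cutting, the kernel of \<phi>i is spanned by its intersection with Ui, so every
  (h1, h2) in H with \<phi>1 h1 = 0 = \<phi>2 h2 lies in the span of H \<inter> (U1 (+) U2).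
  If \<phi>1 h1 \<noteq> 0, both \<phi>i are nonzero, their kernels are hyperplanes, and evasiveness gives
  dim (Ui \<inter> ker \<phi>i) \<le> ni - m - 1 + ti, that is |\<phi>i(Ui)| \<ge> q^(m + 1 - ti).
  Since t1 + t2 \<le> m + 1, the product |\<phi>1(U1)| |\<phi>2(U2)| exceeds q^m = |F|, so two sums
  \<phi>1 u1 + \<phi>2 u2 collide. Their difference is a vector (u1, u2) of H \<inter> (U1 (+) U2) with
  \<phi>1 u1 \<noteq> 0, and subtracting a multiple of it from (h1, h2) reduces to the first case.
  That U1 (+) U2 is an [n1 + n2, k1 + k2] system is a dimension count.
\<close>

section \<open>Subspaces and spans over a subfield\<close>

definition vscale :: "'a::field \<Rightarrow> (nat \<Rightarrow> 'a) \<Rightarrow> nat \<Rightarrow> 'a" where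
  "vscale c v = (\<lambda>i. c * v i)"

lemma vscale_apply [simp]: "vscale c v i = c * v i"
  by (simp add: vscale_def)

lemma vscale_0_left [simp]: "vscale 0 v = 0"
  and vscale_0_right [simp]: "vscale c 0 = 0"
  by (simp_all add: fun_eq_iff)

abbreviation lincomb :: "(nat \<Rightarrow> 'a::field) set \<Rightarrow> ((nat \<Rightarrow> 'a) \<Rightarrow> 'a) \<Rightarrow> nat \<Rightarrow> 'a" where
  "lincomb T c \<equiv> (\<lambda>i. \<Sum>w\<in>T. c w * w i)"

definition closed_over :: "'a::field set \<Rightarrow> (nat \<Rightarrow> 'a) set \<Rightarrow> bool" where
  "closed_over C W \<longleftrightarrow> 0 \<in> W \<and> (\<forall>u\<in>W. \<forall>v\<in>W. u + v \<in> W) \<and> (\<forall>a\<in>C. \<forall>u\<in>W. vscale a u \<in> W)"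

lemma subspace_over_iff: "subspace_over C k W \<longleftrightarrow> W \<subseteq> vecs k \<and> closed_over C W"
  unfolding subspace_over_def closed_over_def vscale_def by (auto simp: plus_fun_def zero_fun_def)

lemma closed_overD:
  assumes "closed_over C W"
  shows "0 \<in> W" and "u \<in> W \<Longrightarrow> v \<in> W \<Longrightarrow> u + v \<in> W"
    and "a \<in> C \<Longrightarrow> u \<in> W \<Longrightarrow> vscale a u \<in> W"
  using assms unfolding closed_over_def by auto

lemma is_subfieldD:
  assumes "is_subfield K"
  shows "0 \<in> K" "1 \<in> K" "x \<in> K \<Longrightarrow> y \<in> K \<Longrightarrow> x + y \<in> K" "x \<in> K \<Longrightarrow> y \<in> K \<Longrightarrow> x * y \<in> K"
    "x \<in> K \<Longrightarrow> - x \<in> K" "x \<in> K \<Longrightarrow> x \<noteq> 0 \<Longrightarrow> inverse x \<in> K"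
  using assms unfolding is_subfield_def by auto

lemma is_subfield_UNIV: "is_subfield UNIV"
  by (simp add: is_subfield_def)

lemma card_subfield_ge_2:
  fixes K :: "'a::field set"
  assumes "is_subfield K" "finite K"
  shows "2 \<le> card K"
proof -
  have "card {0 :: 'a, 1} \<le> card K"
    by (rule card_mono) (use assms is_subfieldD[OF assms(1)] in auto)
  then show ?thesis by simp
qed

lemma card_UNIV_ge_2: "2 \<le> card (UNIV :: 'a::{field,finite} set)"
  by (rule card_subfield_ge_2[OF is_subfield_UNIV finite_UNIV])

lemma closed_over_diff:
  assumes "closed_over C W" "is_subfield C" "u \<in> W" "v \<in> W"
  shows "u - v \<in> W"
proof -
  have "u + vscale (- 1) v \<in> W"
    using assms is_subfieldD(2,5)[OF assms(2)] by (blast intro: closed_overD)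
  moreover have "u + vscale (- 1) v = u - v" by (simp add: fun_eq_iff)
  ultimately show ?thesis by simp
qed

lemma closed_over_Int: "closed_over C U \<Longrightarrow> closed_over UNIV H \<Longrightarrow> closed_over C (U \<inter> H)"
  unfolding closed_over_def by auto

lemma closed_over_lincomb:
  assumes "closed_over C W" "finite T" "T \<subseteq> W" "\<And>w. w \<in> T \<Longrightarrow> c w \<in> C"
  shows "lincomb T c \<in> W"
  using assms(2-4)
proof (induction T rule: finite_induct)
  case empty
  then show ?case using closed_overD(1)[OF assms(1)] by (simp add: zero_fun_def)
next
  case (insert x T)
  have "vscale (c x) x + lincomb T c \<in> W"
    using insert closed_overD[OF assms(1)] by simp
  moreover have "vscale (c x) x + lincomb T c = lincomb (insert x T) c"
    using insert by (simp add: fun_eq_iff)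
  ultimately show ?case by simp
qed

lemma lincomb_mono_neutral:
  "finite T' \<Longrightarrow> T \<subseteq> T' \<Longrightarrow> lincomb T c = lincomb T' (\<lambda>w. if w \<in> T then c w else 0)"
  unfolding fun_eq_iff by (intro allI sum.mono_neutral_cong_left) auto

lemma span_over_least: "closed_over C W \<Longrightarrow> X \<subseteq> W \<Longrightarrow> span_over C X \<subseteq> W"
  unfolding span_over_def using closed_over_lincomb[of C W] by blast

lemma span_over_superset:
  assumes "is_subfield C"
  shows "X \<subseteq> span_over C X"
proof
  fix x assume "x \<in> X"
  moreover have "x = lincomb {x} (\<lambda>_. 1)" by simp
  ultimately show "x \<in> span_over C X"
    unfolding span_over_def using is_subfieldD(2)[OF assms]
    by (intro CollectI exI[of _ "{x}"] exI[of _ "\<lambda>_. 1"]) auto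
qed

lemma closed_span_over:
  assumes C: "is_subfield C"
  shows "closed_over C (span_over C X)"
  unfolding closed_over_def
proof (intro conjI ballI)
  show "0 \<in> span_over C X"
    unfolding span_over_def by (intro CollectI exI[of _ "{}"]) (auto simp: zero_fun_def)
next
  fix u v assume "u \<in> span_over C X" "v \<in> span_over C X"
  then obtain T1 c1 T2 c2
    where T1: "finite T1" "T1 \<subseteq> X" "\<forall>w\<in>T1. c1 w \<in> C" "u = lincomb T1 c1"
      and T2: "finite T2" "T2 \<subseteq> X" "\<forall>w\<in>T2. c2 w \<in> C" "v = lincomb T2 c2"
    unfolding span_over_def by blast
  define c where "c w = (if w \<in> T1 then c1 w else 0) + (if w \<in> T2 then c2 w else 0)" for w
  have "u + v = lincomb (T1 \<union> T2) c"
    using lincomb_mono_neutral[of "T1 \<union> T2" T1 c1] lincomb_mono_neutral[of "T1 \<union> T2" T2 c2] T1 T2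
    by (simp add: fun_eq_iff c_def distrib_right sum.distrib)
  moreover have "\<forall>w\<in>T1 \<union> T2. c w \<in> C"
    using T1 T2 is_subfieldD[OF C] by (auto simp: c_def)
  ultimately show "u + v \<in> span_over C X"
    unfolding span_over_def using T1 T2 by (intro CollectI exI[of _ "T1 \<union> T2"] exI[of _ c]) auto
next
  fix a u assume a: "a \<in> C" and "u \<in> span_over C X"
  then obtain T c where T: "finite T" "T \<subseteq> X" "\<forall>w\<in>T. c w \<in> C" "u = lincomb T c"
    unfolding span_over_def by blast
  have "vscale a u = lincomb T (\<lambda>w. a * c w)"
    using T by (simp add: fun_eq_iff sum_distrib_left mult.assoc)
  moreover have "\<forall>w\<in>T. a * c w \<in> C" using T a is_subfieldD[OF C] by auto
  ultimately show "vscale a u \<in> span_over C X"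
    unfolding span_over_def using T by (intro CollectI exI[of _ T] exI[of _ "\<lambda>w. a * c w"]) auto
qed

lemma vecs_add: "u \<in> vecs k \<Longrightarrow> v \<in> vecs k \<Longrightarrow> u + v \<in> vecs k"
  and vecs_diff: "u \<in> vecs k \<Longrightarrow> v \<in> vecs k \<Longrightarrow> u - v \<in> vecs k"
  and vecs_vscale: "u \<in> vecs k \<Longrightarrow> vscale c u \<in> vecs k"
  and zero_in_vecs: "0 \<in> vecs k"
  by (simp_all add: vecs_def)

lemma closed_over_vecs: "closed_over C (vecs k)"
  by (simp add: closed_over_def zero_in_vecs vecs_add vecs_vscale)

lemma span_over_subset_vecs:
  "X \<subseteq> vecs k \<Longrightarrow> span_over C X \<subseteq> vecs k"
  by (rule span_over_least[OF closed_over_vecs])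

lemma vecs_eq_image_PiE:
  "vecs k = (\<lambda>f i. if i < k then f i else 0) ` ({..<k} \<rightarrow>\<^sub>E (UNIV :: 'a::field set))"
proof
  show "vecs k \<subseteq> (\<lambda>f i. if i < k then f i else 0) ` ({..<k} \<rightarrow>\<^sub>E (UNIV :: 'a set))"
  proof
    fix v :: "nat \<Rightarrow> 'a" assume "v \<in> vecs k"
    then have "v = (\<lambda>i. if i < k then restrict v {..<k} i else 0)"
      by (auto simp: fun_eq_iff vecs_def)
    moreover have "restrict v {..<k} \<in> {..<k} \<rightarrow>\<^sub>E (UNIV :: 'a set)" by simp
    ultimately show "v \<in> (\<lambda>f i. if i < k then f i else 0) ` ({..<k} \<rightarrow>\<^sub>E (UNIV :: 'a set))"
      by (rule image_eqI)
  qed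
next
  show "(\<lambda>f i. if i < k then f i else 0) ` ({..<k} \<rightarrow>\<^sub>E (UNIV :: 'a set)) \<subseteq> vecs k"
    unfolding vecs_def by (rule image_subsetI) simp
qed

lemma inj_on_vecs_PiE:
  "inj_on (\<lambda>f i. if i < k then f i else (0::'a::field)) ({..<k::nat} \<rightarrow>\<^sub>E (UNIV :: 'a set))"
proof (rule inj_onI)
  fix f g :: "nat \<Rightarrow> 'a"
  assume fg: "f \<in> {..<k} \<rightarrow>\<^sub>E UNIV" "g \<in> {..<k} \<rightarrow>\<^sub>E UNIV"
    and eq: "(\<lambda>i. if i < k then f i else 0) = (\<lambda>i. if i < k then g i else 0)"
  have "f i = g i" if "i \<in> {..<k}" for i
    using fun_cong[OF eq, of i] that by simp
  then show "f = g" using fg by (auto intro: PiE_ext)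
qed

lemma card_vecs: "card (vecs k :: (nat \<Rightarrow> 'a::{field,finite}) set) = card (UNIV :: 'a set) ^ k"
  by (simp add: vecs_eq_image_PiE card_image[OF inj_on_vecs_PiE] card_PiE)

lemma finite_vecs: "finite (vecs k :: (nat \<Rightarrow> 'a::{field,finite}) set)"
  unfolding vecs_eq_image_PiE by (intro finite_imageI finite_PiE) simp_all

section \<open>Independence and dimension\<close>

lemma indep_overD:
  "indep_over C B \<Longrightarrow> \<forall>w\<in>B. c w \<in> C \<Longrightarrow> lincomb B c = (\<lambda>i. 0) \<Longrightarrow> w \<in> B \<Longrightarrow> c w = 0"
  unfolding indep_over_def by blast

lemma indep_over_insert:
  assumes C: "is_subfield C" and B: "indep_over C B" and w: "w \<notin> span_over C B"
  shows "indep_over C (insert w B)"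
proof -
  have fB: "finite B" using B unfolding indep_over_def by auto
  have wB: "w \<notin> B" using w span_over_superset[OF C] by blast
  show ?thesis unfolding indep_over_def
  proof (intro conjI allI impI)
    show "finite (insert w B)" using fB by simp
    fix c assume c: "(\<forall>v\<in>insert w B. c v \<in> C) \<and> lincomb (insert w B) c = (\<lambda>i. 0)"
    then have cC: "\<And>v. v \<in> insert w B \<Longrightarrow> c v \<in> C" by auto
    have sum0: "c w * w i + lincomb B c i = 0" for i
      using fun_cong[OF conjunct2[OF c], of i] fB wB by simp
    have cw: "c w = 0"
    proof (rule ccontr)
      assume nz: "c w \<noteq> 0"
      have "w = lincomb B (\<lambda>v. - c v * inverse (c w))"
      proof
        fix i
        have "w i = - inverse (c w) * lincomb B c i"
          using sum0[of i] nz by (simp add: field_simps eq_neg_iff_add_eq_0)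
        then show "w i = lincomb B (\<lambda>v. - c v * inverse (c w)) i"
          by (simp add: sum_distrib_left mult_ac)
      qed
      moreover have "\<forall>v\<in>B. - c v * inverse (c w) \<in> C"
        using cC is_subfieldD[OF C] nz by auto
      ultimately have "w \<in> span_over C B" unfolding span_over_def
        by (intro CollectI exI[of _ B] exI[of _ "\<lambda>v. - c v * inverse (c w)"]) (use fB in simp)
      then show False using w by simp
    qed
    then have "lincomb B c = (\<lambda>i. 0)" using sum0 by simp
    then have "\<forall>v\<in>B. c v = 0" using indep_overD[OF B] cC by blast
    then show "\<forall>v\<in>insert w B. c v = 0" using cw by simp
  qed
qed

lemma exists_basis_over:
  assumes C: "is_subfield C" and W: "finite W" "closed_over C W"
  obtains B where "B \<subseteq> W" "indep_over C B" "span_over C B = W"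
proof -
  define S where "S = {B. B \<subseteq> W \<and> indep_over C B}"
  have fin: "finite (card ` S)"
    unfolding S_def using W(1) by (auto intro: finite_subset[of _ "Pow W"])
  have "{} \<in> S" unfolding S_def by (simp add: indep_over_def)
  then have "card ` S \<noteq> {}" by blast
  from Max_in[OF fin this] obtain B where BS: "B \<in> S" and cB: "card B = Max (card ` S)"
    by (metis imageE)
  have maximal: "card B' \<le> card B" if "B' \<in> S" for B'
    using Max_ge[OF fin] that cB by simp
  have "W \<subseteq> span_over C B"
  proof
    fix w assume wW: "w \<in> W"
    show "w \<in> span_over C B"
    proof (rule ccontr)
      assume nw: "w \<notin> span_over C B"
      then have "insert w B \<in> S" using indep_over_insert[OF C _ nw] BS wW unfolding S_def by auto
      moreover have "w \<notin> B" using nw span_over_superset[OF C] by blast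
      moreover have "finite B" using BS unfolding S_def indep_over_def by auto
      ultimately show False using maximal[of "insert w B"] by simp
    qed
  qed
  moreover have "span_over C B \<subseteq> W" using span_over_least[OF W(2)] BS unfolding S_def by auto
  ultimately show ?thesis using that BS unfolding S_def by blast
qed

lemma card_span_over_indep:
  assumes C: "is_subfield C" and B: "indep_over C B"
  shows "card (span_over C B) = card C ^ card B"
proof -
  have fB: "finite B" using B unfolding indep_over_def by auto
  have img: "span_over C B = (\<lambda>g. lincomb B g) ` (B \<rightarrow>\<^sub>E C)"
  proof
    show "span_over C B \<subseteq> (\<lambda>g. lincomb B g) ` (B \<rightarrow>\<^sub>E C)"
    proof
      fix v assume "v \<in> span_over C B"
      then obtain T c where T: "finite T" "T \<subseteq> B" "\<forall>w\<in>T. c w \<in> C" "v = lincomb T c"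
        unfolding span_over_def by blast
      define g where "g = restrict (\<lambda>w. if w \<in> T then c w else 0) B"
      have "g \<in> B \<rightarrow>\<^sub>E C" unfolding g_def using T is_subfieldD(1)[OF C] by auto
      moreover have "v = lincomb B g"
        using lincomb_mono_neutral[OF fB T(2), of c] T(4) by (simp add: g_def fun_eq_iff)
      ultimately show "v \<in> (\<lambda>g. lincomb B g) ` (B \<rightarrow>\<^sub>E C)" by blast
    qed
  next
    show "(\<lambda>g. lincomb B g) ` (B \<rightarrow>\<^sub>E C) \<subseteq> span_over C B"
      unfolding span_over_def using fB by blast
  qed
  have "inj_on (\<lambda>g. lincomb B g) (B \<rightarrow>\<^sub>E C)"
  proof (rule inj_onI)
    fix g h assume g: "g \<in> B \<rightarrow>\<^sub>E C" and h: "h \<in> B \<rightarrow>\<^sub>E C" and e: "lincomb B g = lincomb B h"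
    have "lincomb B (\<lambda>w. g w + - h w) = (\<lambda>i. 0)"
    proof
      fix i
      have "lincomb B g i = lincomb B h i" using fun_cong[OF e, of i] by simp
      then show "lincomb B (\<lambda>w. g w + - h w) i = 0"
        by (simp add: left_diff_distrib sum_subtractf)
    qed
    moreover have "\<forall>w\<in>B. g w + - h w \<in> C"
      using g h is_subfieldD(3,5)[OF C] by (metis PiE_mem)
    ultimately have "\<forall>w\<in>B. g w + - h w = 0"
      using indep_overD[OF B, of "\<lambda>w. g w + - h w"] by blast
    then show "g = h" using g h by (auto intro: PiE_ext simp: add_eq_0_iff2)
  qed
  then show ?thesis by (simp add: img card_image card_PiE fB)
qed

lemma has_dim_over_iff_card:
  assumes C: "is_subfield C" "finite C" and W: "finite W" "closed_over C W"
  shows "has_dim_over C W d \<longleftrightarrow> card W = card C ^ d"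
proof
  assume "has_dim_over C W d"
  then show "card W = card C ^ d"
    using card_span_over_indep[OF C(1)] unfolding has_dim_over_def by auto
next
  assume cW: "card W = card C ^ d"
  obtain B where B: "B \<subseteq> W" "indep_over C B" "span_over C B = W"
    using exists_basis_over[OF C(1) W] .
  have "card C ^ card B = card C ^ d" using card_span_over_indep[OF C(1) B(2)] B(3) cW by simp
  then have "card B = d" using card_subfield_ge_2[OF C] by (simp add: power_inject_exp)
  then show "has_dim_over C W d" using B unfolding has_dim_over_def by blast
qed

lemma card_eq_power_dim_over:
  assumes C: "is_subfield C" "finite C" and W: "finite W" "closed_over C W"
  shows "card W = card C ^ dim_over C W"
proof -
  obtain B where "B \<subseteq> W" "indep_over C B" "span_over C B = W"
    using exists_basis_over[OF C(1) W] .
  then have "has_dim_over C W (card B)" unfolding has_dim_over_def by blast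
  then have "has_dim_over C W (dim_over C W)" unfolding dim_over_def by (rule LeastI)
  then show ?thesis using has_dim_over_iff_card[OF C W] by blast
qed

section \<open>Counting in abelian groups\<close>

lemma card_eq_card_image_mult_card_kernel:
  fixes G :: "'b::ab_group_add set" and \<phi> :: "'b \<Rightarrow> 'c::ab_group_add"
  assumes fG: "finite G" and diff: "\<And>u v. u \<in> G \<Longrightarrow> v \<in> G \<Longrightarrow> u - v \<in> G"
    and add: "\<And>u v. u \<in> G \<Longrightarrow> v \<in> G \<Longrightarrow> \<phi> (u + v) = \<phi> u + \<phi> v"
  shows "card G = card (\<phi> ` G) * card {g\<in>G. \<phi> g = 0}"
proof -
  have plus: "u + v \<in> G" if "u \<in> G" "v \<in> G" for u v
    using diff[OF that(1) diff[OF diff[OF that(2) that(2)] that(2)]] by simp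
  have minus: "\<phi> (u - v) = \<phi> u - \<phi> v" if "u \<in> G" "v \<in> G" for u v
    using add[OF diff[OF that] that(2)] by (simp add: algebra_simps)
  have "\<forall>a\<in>\<phi> ` G. \<exists>g\<in>G. \<phi> g = a" by blast
  then obtain s where s: "\<And>a. a \<in> \<phi> ` G \<Longrightarrow> s a \<in> G \<and> \<phi> (s a) = a"
    by metis
  \<comment> \<open>g is determined by \<phi> g and its offset from the chosen preimage s (\<phi> g)\<close>
  define F where "F g = (\<phi> g, g - s (\<phi> g))" for g
  have inj: "inj_on F G" by (rule inj_onI) (auto simp: F_def)
  have img: "F ` G = \<phi> ` G \<times> {g\<in>G. \<phi> g = 0}"
  proof
    show "F ` G \<subseteq> \<phi> ` G \<times> {g\<in>G. \<phi> g = 0}"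
    proof
      fix y assume "y \<in> F ` G"
      then obtain g where g: "g \<in> G" "y = F g" by blast
      have "s (\<phi> g) \<in> G" "\<phi> (s (\<phi> g)) = \<phi> g" using s g(1) by auto
      then show "y \<in> \<phi> ` G \<times> {g\<in>G. \<phi> g = 0}"
        using g diff minus by (simp add: F_def)
    qed
    show "\<phi> ` G \<times> {g\<in>G. \<phi> g = 0} \<subseteq> F ` G"
    proof
      fix y assume "y \<in> \<phi> ` G \<times> {g\<in>G. \<phi> g = 0}"
      then obtain a h where y: "y = (a, h)" "a \<in> \<phi> ` G" "h \<in> G" "\<phi> h = 0" by auto
      have "h + s a \<in> G" "\<phi> (h + s a) = a"
        using s[OF y(2)] add y plus by auto
      then have "F (h + s a) = y" "h + s a \<in> G" using y(1) by (simp_all add: F_def)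
      then show "y \<in> F ` G" by (metis image_eqI)
    qed
  qed
  have "card G = card (F ` G)" using card_image[OF inj] by simp
  then show ?thesis by (simp add: img card_cartesian_product)
qed

lemma add_collision_if_card_gt:
  fixes A B :: "'c::{ab_group_add,finite} set"
  assumes "card A * card B > card (UNIV :: 'c set)"
  obtains a a' b b' where "a \<in> A" "a' \<in> A" "b \<in> B" "b' \<in> B" "a \<noteq> a'" "a + b = a' + b'"
proof -
  have "\<not> inj_on (\<lambda>(a, b). a + b) (A \<times> B)"
  proof
    assume "inj_on (\<lambda>(a, b). a + b) (A \<times> B)"
    then have "card ((\<lambda>(a, b). a + b) ` (A \<times> B)) = card A * card B"
      by (simp add: card_image card_cartesian_product)
    moreover have "card ((\<lambda>(a, b). a + b) ` (A \<times> B)) \<le> card (UNIV :: 'c set)"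
      by (rule card_mono) auto
    ultimately show False using assms by simp
  qed
  then obtain a b a' b' where "a \<in> A" "b \<in> B" "a' \<in> A" "b' \<in> B"
      "(a, b) \<noteq> (a', b')" "a + b = a' + b'"
    unfolding inj_on_def by auto
  moreover from this have "a \<noteq> a'" by auto
  ultimately show ?thesis using that by blast
qed

section \<open>Linear forms and hyperplanes\<close>

definition linear_form :: "nat \<Rightarrow> ((nat \<Rightarrow> 'a::field) \<Rightarrow> 'a) \<Rightarrow> bool" where
  "linear_form k \<phi> \<longleftrightarrow> (\<forall>u\<in>vecs k. \<forall>v\<in>vecs k. \<phi> (u + v) = \<phi> u + \<phi> v)
     \<and> (\<forall>c. \<forall>u\<in>vecs k. \<phi> (vscale c u) = c * \<phi> u)"

definition form_kernel :: "nat \<Rightarrow> ((nat \<Rightarrow> 'a::field) \<Rightarrow> 'a) \<Rightarrow> (nat \<Rightarrow> 'a) set" where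
  "form_kernel k \<phi> = {u \<in> vecs k. \<phi> u = 0}"

lemma linear_form_add: "linear_form k \<phi> \<Longrightarrow> u \<in> vecs k \<Longrightarrow> v \<in> vecs k \<Longrightarrow> \<phi> (u + v) = \<phi> u + \<phi> v"
  and linear_form_vscale: "linear_form k \<phi> \<Longrightarrow> u \<in> vecs k \<Longrightarrow> \<phi> (vscale c u) = c * \<phi> u"
  unfolding linear_form_def by blast+

lemma linear_form_zero: "linear_form k \<phi> \<Longrightarrow> \<phi> 0 = 0"
  using linear_form_vscale[OF _ zero_in_vecs, of k \<phi> 0] by simp

lemma linear_form_diff:
  assumes "linear_form k \<phi>" "u \<in> vecs k" "v \<in> vecs k"
  shows "\<phi> (u - v) = \<phi> u - \<phi> v"
  using linear_form_add[OF assms(1) vecs_diff[OF assms(2,3)] assms(3)] by (simp add: algebra_simps)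

lemma closed_over_form_kernel: "linear_form k \<phi> \<Longrightarrow> closed_over C (form_kernel k \<phi>)"
  by (simp add: closed_over_def form_kernel_def linear_form_add linear_form_vscale linear_form_zero
      zero_in_vecs vecs_add vecs_vscale)

lemma finite_form_kernel: "finite (form_kernel k (\<phi> :: (nat \<Rightarrow> 'a::{field,finite}) \<Rightarrow> 'a))"
  unfolding form_kernel_def by (rule finite_subset[OF _ finite_vecs]) auto

lemma is_hyperplaneD:
  fixes H :: "(nat \<Rightarrow> 'a::{field,finite}) set"
  assumes "is_hyperplane k H"
  obtains d where "k = Suc d" "H \<subseteq> vecs k" "closed_over UNIV H" "card H = card (UNIV :: 'a set) ^ d"
proof -
  obtain d where H: "H \<subseteq> vecs k" "closed_over UNIV H"
    and "has_dim_over UNIV H d" "int d = int k - 1"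
    using assms unfolding is_hyperplane_def subspace_over_iff by blast
  moreover have "finite H" using H(1) finite_vecs finite_subset by blast
  moreover have "k = Suc d" using \<open>int d = int k - 1\<close> by linarith
  ultimately show ?thesis
    using that has_dim_over_iff_card[OF is_subfield_UNIV finite_UNIV] by blast
qed

lemma is_hyperplane_form_kernel:
  fixes \<phi> :: "(nat \<Rightarrow> 'a::{field,finite}) \<Rightarrow> 'a"
  assumes \<phi>: "linear_form k \<phi>" and v: "v \<in> vecs k" "\<phi> v \<noteq> 0"
  shows "is_hyperplane k (form_kernel k \<phi>)"
proof -
  let ?Q = "card (UNIV :: 'a set)"
  have Q: "2 \<le> ?Q" using card_UNIV_ge_2[where 'a='a] by simp
  have "a = \<phi> (vscale (a / \<phi> v) v)" for a using linear_form_vscale[OF \<phi> v(1)] v(2) by simp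
  then have surj: "\<phi> ` vecs k = UNIV" using vecs_vscale[OF v(1)] by blast
  have "card (vecs k :: (nat \<Rightarrow> 'a) set) = card (\<phi> ` vecs k) * card {u \<in> vecs k. \<phi> u = 0}"
    by (rule card_eq_card_image_mult_card_kernel)
      (simp_all add: finite_vecs vecs_diff linear_form_add[OF \<phi>])
  then have "?Q ^ k = ?Q * card (form_kernel k \<phi>)" by (simp add: card_vecs surj form_kernel_def)
  then obtain d where k: "k = Suc d" and "card (form_kernel k \<phi>) = ?Q ^ d"
    using Q by (cases k) auto
  then have "has_dim_over UNIV (form_kernel k \<phi>) d"
    using has_dim_over_iff_card[OF is_subfield_UNIV finite_UNIV finite_form_kernel
        closed_over_form_kernel[OF \<phi>]]
    by simp
  then show ?thesis
    using closed_over_form_kernel[OF \<phi>] k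
    unfolding is_hyperplane_def subspace_over_iff by (auto simp: form_kernel_def)
qed

lemma vscale_mem_imp_zero:
  assumes "closed_over UNIV H" "x \<notin> H" "vscale c x \<in> H"
  shows "c = 0"
proof (rule ccontr)
  assume "c \<noteq> 0"
  then have "vscale (inverse c) (vscale c x) = x" by (simp add: fun_eq_iff)
  moreover have "vscale (inverse c) (vscale c x) \<in> H"
    using closed_overD(3)[OF assms(1) UNIV_I assms(3)] .
  ultimately show False using assms(2) by simp
qed

lemma hyperplane_plus_line:
  fixes H :: "(nat \<Rightarrow> 'a::{field,finite}) set"
  assumes H: "is_hyperplane k H" and x: "x \<in> vecs k" "x \<notin> H" and v: "v \<in> vecs k"
  obtains c where "v - vscale c x \<in> H"
proof -
  obtain d where k: "k = Suc d" and Hv: "H \<subseteq> vecs k" and clH: "closed_over UNIV H"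
    and cH: "card H = card (UNIV :: 'a set) ^ d"
    using is_hyperplaneD[OF H] .
  define g where "g p = fst p + vscale (snd p) x" for p
  have "inj_on g (H \<times> UNIV)"
  proof (rule inj_onI)
    fix p p' assume p: "p \<in> H \<times> UNIV" "p' \<in> H \<times> UNIV" "g p = g p'"
    then have "vscale (snd p - snd p') x = fst p' - fst p"
      unfolding g_def by (simp add: fun_eq_iff algebra_simps)
    then have "vscale (snd p - snd p') x \<in> H"
      using closed_over_diff[OF clH is_subfield_UNIV] p by auto
    then have "snd p = snd p'" using vscale_mem_imp_zero[OF clH x(2)] by fastforce
    then show "p = p'" using p(3) unfolding g_def by (simp add: prod_eq_iff)
  qed
  then have "card (g ` (H \<times> UNIV)) = card (vecs k :: (nat \<Rightarrow> 'a) set)"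
    by (simp add: card_image card_cartesian_product cH card_vecs k power_Suc2)
  moreover have "g ` (H \<times> UNIV) \<subseteq> vecs k"
    unfolding g_def using Hv x(1) by (auto intro!: vecs_add vecs_vscale)
  ultimately have "g ` (H \<times> UNIV) = vecs k" using card_subset_eq[OF finite_vecs] by blast
  then obtain p where p: "p \<in> H \<times> UNIV" "v = g p" using v by blast
  then have "v - vscale (snd p) x = fst p" unfolding g_def by simp
  then show ?thesis using that p(1) by auto
qed

lemma
  fixes H :: "(nat \<Rightarrow> 'a::field) set"
  assumes Hv: "H \<subseteq> vecs k" and clH: "closed_over UNIV H" and x: "x \<notin> H"
    and \<phi>: "\<And>v. v \<in> vecs k \<Longrightarrow> v - vscale (\<phi> v) x \<in> H"
  shows linear_form_line_coordinate: "linear_form k \<phi>"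
    and form_kernel_line_coordinate: "H = form_kernel k \<phi>"
proof -
  have uniq: "\<phi> v = c" if "v \<in> vecs k" "v - vscale c x \<in> H" for v c
  proof -
    have "(v - vscale c x) - (v - vscale (\<phi> v) x) = vscale (\<phi> v - c) x"
      by (simp add: fun_eq_iff algebra_simps)
    then have "vscale (\<phi> v - c) x \<in> H"
      using closed_over_diff[OF clH is_subfield_UNIV that(2) \<phi>[OF that(1)]] by simp
    then show ?thesis using vscale_mem_imp_zero[OF clH x] by fastforce
  qed
  show "linear_form k \<phi>"
    unfolding linear_form_def
  proof (intro conjI ballI allI)
    fix u v :: "nat \<Rightarrow> 'a" assume uv: "u \<in> vecs k" "v \<in> vecs k"
    have eq: "(u + v) - vscale (\<phi> u + \<phi> v) x = (u - vscale (\<phi> u) x) + (v - vscale (\<phi> v) x)"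
      by (simp add: fun_eq_iff algebra_simps)
    have "(u + v) - vscale (\<phi> u + \<phi> v) x \<in> H"
      unfolding eq by (rule closed_overD(2)[OF clH \<phi>[OF uv(1)] \<phi>[OF uv(2)]])
    then show "\<phi> (u + v) = \<phi> u + \<phi> v" by (rule uniq[OF vecs_add[OF uv]])
  next
    fix c and u :: "nat \<Rightarrow> 'a" assume u: "u \<in> vecs k"
    have eq: "vscale c u - vscale (c * \<phi> u) x = vscale c (u - vscale (\<phi> u) x)"
      by (simp add: fun_eq_iff algebra_simps)
    have "vscale c u - vscale (c * \<phi> u) x \<in> H"
      unfolding eq by (rule closed_overD(3)[OF clH UNIV_I \<phi>[OF u]])
    then show "\<phi> (vscale c u) = c * \<phi> u" by (rule uniq[OF vecs_vscale[OF u]])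
  qed
  show "H = form_kernel k \<phi>"
    using Hv uniq[of _ 0] \<phi> unfolding form_kernel_def by force
qed

lemma hyperplane_eq_form_kernel:
  fixes H :: "(nat \<Rightarrow> 'a::{field,finite}) set"
  assumes H: "is_hyperplane k H"
  obtains \<phi> where "linear_form k \<phi>" "H = form_kernel k \<phi>"
proof -
  obtain d where k: "k = Suc d" and Hv: "H \<subseteq> vecs k" and clH: "closed_over UNIV H"
    and cH: "card H = card (UNIV :: 'a set) ^ d"
    using is_hyperplaneD[OF H] .
  have "card H < card (vecs k :: (nat \<Rightarrow> 'a) set)"
    using cH card_UNIV_ge_2[where 'a='a] by (simp add: card_vecs k)
  then have "\<not> vecs k \<subseteq> H"
    using card_mono[OF finite_subset[OF Hv finite_vecs]] by (meson not_le)
  then obtain x where x: "x \<in> vecs k" "x \<notin> H" by blast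
  have "\<forall>v\<in>vecs k. \<exists>c. v - vscale c x \<in> H"
    using hyperplane_plus_line[OF H x] by metis
  then obtain \<phi> where "\<And>v. v \<in> vecs k \<Longrightarrow> v - vscale (\<phi> v) x \<in> H"
    by metis
  then show ?thesis
    using that linear_form_line_coordinate form_kernel_line_coordinate Hv clH x(2) by metis
qed

section \<open>Systems\<close>

lemma is_systemD:
  assumes "is_system K n k U"
  shows "U \<subseteq> vecs k" "closed_over K U" "has_dim_over K U n" "span_over UNIV U = vecs k"
  using assms by (simp_all add: is_system_def subspace_over_iff)

lemma card_image_form_mult_power_dim:
  fixes K :: "'a::{field,finite} set"
  assumes K: "is_subfield K" and U: "is_system K n k U" and \<phi>: "linear_form k \<phi>"
  shows "card (\<phi> ` U) * card K ^ dim_over K (U \<inter> form_kernel k \<phi>) = card K ^ n"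
proof -
  note Uv = is_systemD(1)[OF U] and clU = is_systemD(2)[OF U]
  have fU: "finite U" using Uv finite_vecs finite_subset by blast
  have "card U = card (\<phi> ` U) * card {u \<in> U. \<phi> u = 0}"
    by (rule card_eq_card_image_mult_card_kernel)
      (use fU closed_over_diff[OF clU K] subsetD[OF Uv] linear_form_add[OF \<phi>] in auto)
  moreover have "{u \<in> U. \<phi> u = 0} = U \<inter> form_kernel k \<phi>"
    using Uv by (auto simp: form_kernel_def)
  moreover have "card (U \<inter> form_kernel k \<phi>) = card K ^ dim_over K (U \<inter> form_kernel k \<phi>)"
    using fU closed_over_Int[OF clU closed_over_form_kernel[OF \<phi>]]
    by (intro card_eq_power_dim_over[OF K finite]) auto
  moreover have "card U = card K ^ n"
    using has_dim_over_iff_card[OF K finite fU clU] is_systemD(3)[OF U] by simp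
  ultimately show ?thesis by simp
qed

lemma card_image_form_lower_bound:
  fixes K :: "'a::{field,finite} set"
  assumes K: "is_subfield K" and U: "is_system K n k U"
    and ev: "is_evasive K k (int k - 1) (int n - int m - 1 + int t) U"
    and \<phi>: "linear_form k \<phi>" and v: "v \<in> vecs k" "\<phi> v \<noteq> 0"
  shows "card K ^ (m + 1) \<le> card (\<phi> ` U) * card K ^ t"
proof -
  define d where "d = dim_over K (U \<inter> form_kernel k \<phi>)"
  have q: "2 \<le> card K" using card_subfield_ge_2[OF K] by simp
  have "int d \<le> int n - int m - 1 + int t"
    using is_hyperplane_form_kernel[OF \<phi> v] ev
    unfolding is_hyperplane_def is_evasive_def d_def by blast
  then have "card K ^ (m + 1 + d) \<le> card K ^ (n + t)"
    using q by (intro power_increasing) auto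
  also have "\<dots> = card (\<phi> ` U) * card K ^ t * card K ^ d"
    using card_image_form_mult_power_dim[OF K U \<phi>] by (simp add: d_def power_add mult_ac)
  finally show ?thesis using q by (simp add: power_add)
qed

lemma card_UNIV_less_card_images:
  fixes K :: "'a::{field,finite} set"
  assumes K: "is_subfield K" and F: "card (UNIV :: 'a set) = card K ^ m"
    and U1: "is_system K n1 k1 U1" "is_evasive K k1 (int k1 - 1) (int n1 - int m - 1 + int t1) U1"
    and U2: "is_system K n2 k2 U2" "is_evasive K k2 (int k2 - 1) (int n2 - int m - 1 + int t2) U2"
    and t: "t1 + t2 < m + 2"
    and \<phi>1: "linear_form k1 \<phi>1" "v1 \<in> vecs k1" "\<phi>1 v1 \<noteq> 0"
    and \<phi>2: "linear_form k2 \<phi>2" "v2 \<in> vecs k2" "\<phi>2 v2 \<noteq> 0"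
  shows "card (UNIV :: 'a set) < card (\<phi>1 ` U1) * card (\<phi>2 ` U2)"
proof -
  let ?q = "card K" and ?A = "card (\<phi>1 ` U1)" and ?B = "card (\<phi>2 ` U2)"
  have q: "2 \<le> ?q" using card_subfield_ge_2[OF K] by simp
  have "?q ^ (m + 1) * ?q ^ (m + 1) \<le> (?A * ?q ^ t1) * (?B * ?q ^ t2)"
    using card_image_form_lower_bound[OF K U1 \<phi>1] card_image_form_lower_bound[OF K U2 \<phi>2]
    by (rule mult_le_mono)
  also have "\<dots> \<le> ?A * ?B * ?q ^ (m + 1)"
  proof -
    have "?q ^ (t1 + t2) \<le> ?q ^ (m + 1)" using q t by (intro power_increasing) auto
    then show ?thesis by (simp add: power_add mult_ac)
  qed
  finally have "?q ^ (m + 1) \<le> ?A * ?B" using q by simp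
  moreover have "?q ^ m < ?q ^ (m + 1)" using q by simp
  ultimately show ?thesis using F by linarith
qed

lemma exists_form_collision:
  fixes K :: "'a::{field,finite} set"
  assumes K: "is_subfield K" and U1: "is_system K n1 k1 U1" and U2: "is_system K n2 k2 U2"
    and \<phi>1: "linear_form k1 \<phi>1" and \<phi>2: "linear_form k2 \<phi>2"
    and card: "card (UNIV :: 'a set) < card (\<phi>1 ` U1) * card (\<phi>2 ` U2)"
  obtains u1 u2 where "u1 \<in> U1" "u2 \<in> U2" "\<phi>1 u1 \<noteq> 0" "\<phi>1 u1 + \<phi>2 u2 = 0"
proof -
  obtain a a' b b' where ab: "a \<in> \<phi>1 ` U1" "a' \<in> \<phi>1 ` U1" "b \<in> \<phi>2 ` U2" "b' \<in> \<phi>2 ` U2"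
      "a \<noteq> a'" "a + b = a' + b'"
    using add_collision_if_card_gt[OF card] .
  then obtain u u' w w' where uw: "u \<in> U1" "u' \<in> U1" "w \<in> U2" "w' \<in> U2"
    "a = \<phi>1 u" "a' = \<phi>1 u'" "b = \<phi>2 w" "b' = \<phi>2 w'"
    by blast
  note vecs = subsetD[OF is_systemD(1)[OF U1]] subsetD[OF is_systemD(1)[OF U2]]
  show ?thesis
  proof (rule that)
    show "u - u' \<in> U1" using closed_over_diff[OF is_systemD(2)[OF U1] K] uw by blast
    show "w - w' \<in> U2" using closed_over_diff[OF is_systemD(2)[OF U2] K] uw by blast
    have diffs: "\<phi>1 (u - u') = a - a'" "\<phi>2 (w - w') = b - b'"
      using linear_form_diff[OF \<phi>1] linear_form_diff[OF \<phi>2] vecs uw by simp_all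
    then show "\<phi>1 (u - u') \<noteq> 0" using ab(5) by simp
    have "(a - a') + (b - b') = (a + b) - (a' + b')" by (simp add: algebra_simps)
    then show "\<phi>1 (u - u') + \<phi>2 (w - w') = 0" using diffs ab(6) by simp
  qed
qed

lemma cutting_form_kernel_subset_span:
  fixes \<phi> :: "(nat \<Rightarrow> 'a::{field,finite}) \<Rightarrow> 'a"
  assumes U: "is_system K n k U" "is_cutting k U" and \<phi>: "linear_form k \<phi>"
  shows "form_kernel k \<phi> \<subseteq> span_over UNIV {u \<in> U. \<phi> u = 0}"
proof (cases "\<exists>v\<in>vecs k. \<phi> v \<noteq> 0")
  case True
  then have "span_over UNIV (form_kernel k \<phi> \<inter> U) = form_kernel k \<phi>"
    using U(2) is_hyperplane_form_kernel[OF \<phi>] unfolding is_cutting_def by blast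
  moreover have "form_kernel k \<phi> \<inter> U = {u \<in> U. \<phi> u = 0}"
    using is_systemD(1)[OF U(1)] by (auto simp: form_kernel_def)
  ultimately show ?thesis by simp
next
  case False
  then have "{u \<in> U. \<phi> u = 0} = U" using is_systemD(1)[OF U(1)] by auto
  then show ?thesis using is_systemD(4)[OF U(1)] by (auto simp: form_kernel_def)
qed

lemma closed_over_vimage:
  assumes "closed_over C S"
    and "\<And>u v. f (u + v) = f u + f v" "\<And>c u. f (vscale c u) = vscale c (f u)" "f 0 = 0"
  shows "closed_over C {u \<in> vecs k. f u \<in> S}"
  using assms unfolding closed_over_def by (auto simp: zero_in_vecs vecs_add vecs_vscale)

lemma form_kernel_subset_vimage:
  fixes \<phi> :: "(nat \<Rightarrow> 'a::{field,finite}) \<Rightarrow> 'a"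
  assumes U: "is_system K n k U" "is_cutting k U" and \<phi>: "linear_form k \<phi>"
    and S: "closed_over UNIV S"
    and f: "\<And>u v. f (u + v) = f u + f v" "\<And>c u. f (vscale c u) = vscale c (f u)" "f 0 = 0"
    and US: "\<And>u. u \<in> U \<Longrightarrow> \<phi> u = 0 \<Longrightarrow> f u \<in> S"
    and u: "u \<in> form_kernel k \<phi>"
  shows "f u \<in> S"
proof -
  have "{u \<in> U. \<phi> u = 0} \<subseteq> {u \<in> vecs k. f u \<in> S}" using US is_systemD(1)[OF U(1)] by auto
  then have "span_over UNIV {u \<in> U. \<phi> u = 0} \<subseteq> {u \<in> vecs k. f u \<in> S}"
    by (rule span_over_least[OF closed_over_vimage[OF S f]])
  then show ?thesis using cutting_form_kernel_subset_span[OF U \<phi>] u by blast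
qed

section \<open>Direct sums\<close>

definition concat_vec :: "nat \<Rightarrow> (nat \<Rightarrow> 'a) \<Rightarrow> (nat \<Rightarrow> 'a) \<Rightarrow> nat \<Rightarrow> 'a" where
  "concat_vec k u w = (\<lambda>i. if i < k then u i else w (i - k))"

lemma direct_sum_eq_image: "direct_sum k U1 U2 = (\<lambda>(u, w). concat_vec k u w) ` (U1 \<times> U2)"
  unfolding direct_sum_def concat_vec_def by auto

lemma concat_vec_in_vecs: "u \<in> vecs k1 \<Longrightarrow> w \<in> vecs k2 \<Longrightarrow> concat_vec k1 u w \<in> vecs (k1 + k2)"
  by (auto simp: concat_vec_def vecs_def)

lemma vecs_add_cases:
  assumes "v \<in> vecs (k1 + k2)"
  obtains u w where "u \<in> vecs k1" "w \<in> vecs k2" "v = concat_vec k1 u w"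
proof
  show "(\<lambda>i. if i < k1 then v i else 0) \<in> vecs k1" "(\<lambda>i. v (i + k1)) \<in> vecs k2"
    using assms by (simp_all add: vecs_def)
  show "v = concat_vec k1 (\<lambda>i. if i < k1 then v i else 0) (\<lambda>i. v (i + k1))"
    by (simp add: concat_vec_def fun_eq_iff)
qed

lemma concat_vec_split:
  "concat_vec k u w = concat_vec k u 0 + (concat_vec k 0 w :: nat \<Rightarrow> 'a::monoid_add)"
  by (simp add: concat_vec_def fun_eq_iff)

lemma concat_vec_add: "concat_vec k u w + concat_vec k u' w' = concat_vec k (u + u') (w + w')"
  and concat_vec_vscale: "vscale c (concat_vec k u w) = concat_vec k (vscale c u) (vscale c w)"
  and concat_vec_zero: "concat_vec k 0 0 = 0"
  by (simp_all add: concat_vec_def fun_eq_iff)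

lemma inj_on_concat_vec: "U \<subseteq> vecs k \<Longrightarrow> inj_on (\<lambda>(u, w). concat_vec k u w) (U \<times> W)"
proof (rule inj_onI, clarify)
  fix u w u' w' assume U: "U \<subseteq> vecs k" "u \<in> U" "u' \<in> U"
    and eq: "concat_vec k u w = concat_vec k u' w'"
  have "u i = u' i" for i
  proof (cases "i < k")
    case True
    then show ?thesis using fun_cong[OF eq, of i] by (simp add: concat_vec_def)
  next
    case False
    have "u \<in> vecs k" "u' \<in> vecs k" using U by auto
    then show ?thesis using False by (simp add: vecs_def)
  qed
  moreover have "w i = w' i" for i
    using fun_cong[OF eq, of "i + k"] by (simp add: concat_vec_def)
  ultimately show "u = u' \<and> w = w'" by (simp add: fun_eq_iff)
qed

lemma concat_vec_mem_direct_sum: "u \<in> U1 \<Longrightarrow> w \<in> U2 \<Longrightarrow> concat_vec k u w \<in> direct_sum k U1 U2"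
  unfolding direct_sum_def concat_vec_def by blast

lemma direct_sum_cases:
  assumes "x \<in> direct_sum k U1 U2"
  obtains u w where "u \<in> U1" "w \<in> U2" "x = concat_vec k u w"
  using assms unfolding direct_sum_def concat_vec_def by blast

lemma closed_over_direct_sum:
  assumes U1: "closed_over C U1" and U2: "closed_over C U2"
  shows "closed_over C (direct_sum k U1 U2)"
  unfolding closed_over_def
proof (intro conjI ballI)
  show "0 \<in> direct_sum k U1 U2"
    using concat_vec_mem_direct_sum[OF closed_overD(1)[OF U1] closed_overD(1)[OF U2]]
    by (simp add: concat_vec_zero)
next
  fix x y assume "x \<in> direct_sum k U1 U2" "y \<in> direct_sum k U1 U2"
  then obtain u w u' w' where "u \<in> U1" "w \<in> U2" "u' \<in> U1" "w' \<in> U2"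
    and "x = concat_vec k u w" "y = concat_vec k u' w'" by (metis direct_sum_cases)
  then show "x + y \<in> direct_sum k U1 U2"
    using closed_overD(2)[OF U1] closed_overD(2)[OF U2]
    by (simp add: concat_vec_add concat_vec_mem_direct_sum)
next
  fix a x assume "a \<in> C" "x \<in> direct_sum k U1 U2"
  then obtain u w where "a \<in> C" "u \<in> U1" "w \<in> U2" "x = concat_vec k u w"
    by (metis direct_sum_cases)
  then show "vscale a x \<in> direct_sum k U1 U2"
    using closed_overD(3)[OF U1] closed_overD(3)[OF U2]
    by (simp add: concat_vec_vscale concat_vec_mem_direct_sum)
qed

lemma span_over_direct_sum:
  assumes U1: "span_over UNIV U1 = vecs k1" "0 \<in> U1" and U2: "span_over UNIV U2 = vecs k2" "0 \<in> U2"
  shows "span_over UNIV (direct_sum k1 U1 U2) = vecs (k1 + k2)"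
proof
  have U1v: "U1 \<subseteq> vecs k1" and U2v: "U2 \<subseteq> vecs k2"
    using span_over_superset[OF is_subfield_UNIV] U1(1) U2(1) by blast+
  then show "span_over UNIV (direct_sum k1 U1 U2) \<subseteq> vecs (k1 + k2)"
    by (intro span_over_subset_vecs) (auto simp: direct_sum_eq_image intro: concat_vec_in_vecs)
  define S where "S = span_over UNIV (direct_sum k1 U1 U2)"
  have S: "closed_over UNIV S" unfolding S_def by (rule closed_span_over[OF is_subfield_UNIV])
  have DS: "concat_vec k1 u w \<in> S" if "u \<in> U1" "w \<in> U2" for u w
    using concat_vec_mem_direct_sum[OF that] span_over_superset[OF is_subfield_UNIV]
    unfolding S_def by blast
  have left: "span_over UNIV U1 \<subseteq> {u \<in> vecs k1. concat_vec k1 u 0 \<in> S}"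
  proof (rule span_over_least[OF closed_over_vimage[OF S]])
    show "U1 \<subseteq> {u \<in> vecs k1. concat_vec k1 u 0 \<in> S}" using DS U1v U2(2) by blast
  qed (simp_all add: concat_vec_add concat_vec_vscale concat_vec_zero)
  have right: "span_over UNIV U2 \<subseteq> {w \<in> vecs k2. concat_vec k1 0 w \<in> S}"
  proof (rule span_over_least[OF closed_over_vimage[OF S]])
    show "U2 \<subseteq> {w \<in> vecs k2. concat_vec k1 0 w \<in> S}" using DS U2v U1(2) by blast
  qed (simp_all add: concat_vec_add concat_vec_vscale concat_vec_zero)
  show "vecs (k1 + k2) \<subseteq> S"
  proof
    fix v :: "nat \<Rightarrow> 'a" assume "v \<in> vecs (k1 + k2)"
    then obtain u w where uw: "u \<in> vecs k1" "w \<in> vecs k2" "v = concat_vec k1 u w"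
      by (rule vecs_add_cases)
    then have "concat_vec k1 u 0 \<in> S" "concat_vec k1 0 w \<in> S"
      using left right U1(1) U2(1) by blast+
    then show "v \<in> S" using closed_overD(2)[OF S] concat_vec_split uw(3) by metis
  qed
qed

lemma is_system_direct_sum:
  fixes K :: "'a::{field,finite} set"
  assumes K: "is_subfield K" and U1: "is_system K n1 k1 U1" and U2: "is_system K n2 k2 U2"
  shows "is_system K (n1 + n2) (k1 + k2) (direct_sum k1 U1 U2)"
proof -
  let ?D = "direct_sum k1 U1 U2"
  note sys1 = is_systemD[OF U1] and sys2 = is_systemD[OF U2]
  have span: "span_over UNIV ?D = vecs (k1 + k2)"
    using span_over_direct_sum sys1(4) sys2(4) closed_overD(1) sys1(2) sys2(2) by blast
  then have Dv: "?D \<subseteq> vecs (k1 + k2)" using span_over_superset[OF is_subfield_UNIV] by blast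
  have clD: "closed_over K ?D" using closed_over_direct_sum[OF sys1(2) sys2(2)] .
  have "card U1 = card K ^ n1" "card U2 = card K ^ n2"
    using has_dim_over_iff_card[OF K finite finite_subset[OF sys1(1) finite_vecs] sys1(2)] sys1(3)
      has_dim_over_iff_card[OF K finite finite_subset[OF sys2(1) finite_vecs] sys2(2)] sys2(3)
    by simp_all
  then have "card ?D = card K ^ (n1 + n2)"
    by (simp add: direct_sum_eq_image card_image[OF inj_on_concat_vec[OF sys1(1)]]
        card_cartesian_product power_add)
  then have "has_dim_over K ?D (n1 + n2)"
    using has_dim_over_iff_card[OF K finite finite_subset[OF Dv finite_vecs] clD] by simp
  then show ?thesis using span Dv clD unfolding is_system_def subspace_over_iff by blast
qed

lemma linear_form_comp:
  assumes "linear_form k \<phi>" and "\<And>u. u \<in> vecs k' \<Longrightarrow> f u \<in> vecs k"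
    and "\<And>u v. f (u + v) = f u + f v" and "\<And>c u. f (vscale c u) = vscale c (f u)"
  shows "linear_form k' (\<lambda>u. \<phi> (f u))"
  using assms unfolding linear_form_def by (simp add: vecs_add vecs_vscale)

lemma linear_form_concat_left:
  assumes "linear_form (k1 + k2) \<phi>"
  shows "linear_form k1 (\<lambda>u. \<phi> (concat_vec k1 u 0))"
  by (rule linear_form_comp[OF assms, where f = "\<lambda>u. concat_vec k1 u 0"])
    (simp_all add: concat_vec_in_vecs zero_in_vecs concat_vec_add concat_vec_vscale)

lemma linear_form_concat_right:
  assumes "linear_form (k1 + k2) \<phi>"
  shows "linear_form k2 (\<lambda>w. \<phi> (concat_vec k1 0 w))"
  by (rule linear_form_comp[OF assms, where f = "concat_vec k1 0"])
    (simp_all add: concat_vec_in_vecs zero_in_vecs concat_vec_add concat_vec_vscale)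

lemma linear_form_concat:
  assumes "linear_form (k1 + k2) \<phi>" "u \<in> vecs k1" "w \<in> vecs k2"
  shows "\<phi> (concat_vec k1 u w) = \<phi> (concat_vec k1 u 0) + \<phi> (concat_vec k1 0 w)"
  by (subst concat_vec_split, rule linear_form_add[OF assms(1)])
    (simp_all add: assms(2,3) concat_vec_in_vecs zero_in_vecs)

lemma concat_vec_mem_span_kernel:
  assumes "U1 \<subseteq> vecs k1" "U2 \<subseteq> vecs k2" "u \<in> U1" "w \<in> U2" "\<phi> (concat_vec k1 u w) = 0"
  shows "concat_vec k1 u w \<in> span_over UNIV (form_kernel (k1 + k2) \<phi> \<inter> direct_sum k1 U1 U2)"
proof -
  have "u \<in> vecs k1" "w \<in> vecs k2" using assms(1-4) by blast+
  then have "concat_vec k1 u w \<in> form_kernel (k1 + k2) \<phi>"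
    using concat_vec_in_vecs assms(5) by (simp add: form_kernel_def)
  then show ?thesis
    using concat_vec_mem_direct_sum[OF assms(3,4)] span_over_superset[OF is_subfield_UNIV] by blast
qed

lemma concat_vec_mem_span_kernel_cutting:
  fixes \<phi> :: "(nat \<Rightarrow> 'a::{field,finite}) \<Rightarrow> 'a"
  assumes U1: "is_system K n1 k1 U1" "is_cutting k1 U1"
    and U2: "is_system K n2 k2 U2" "is_cutting k2 U2"
    and \<phi>: "linear_form (k1 + k2) \<phi>"
    and u: "u \<in> vecs k1" "\<phi> (concat_vec k1 u 0) = 0"
    and w: "w \<in> vecs k2" "\<phi> (concat_vec k1 0 w) = 0"
  shows "concat_vec k1 u w \<in> span_over UNIV (form_kernel (k1 + k2) \<phi> \<inter> direct_sum k1 U1 U2)"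
    (is "_ \<in> ?S")
proof -
  have S: "closed_over UNIV ?S" by (rule closed_span_over[OF is_subfield_UNIV])
  note mem_S =
    concat_vec_mem_span_kernel[where \<phi> = \<phi>, OF is_systemD(1)[OF U1(1)] is_systemD(1)[OF U2(1)]]
  have "concat_vec k1 u 0 \<in> ?S"
  proof (rule form_kernel_subset_vimage[OF U1 linear_form_concat_left[OF \<phi>] S,
        where f = "\<lambda>u. concat_vec k1 u 0"])
    show "concat_vec k1 u' 0 \<in> ?S" if "u' \<in> U1" "\<phi> (concat_vec k1 u' 0) = 0" for u'
      using mem_S[OF that(1) closed_overD(1)[OF is_systemD(2)[OF U2(1)]] that(2)] .
  qed (use u in \<open>simp_all add: concat_vec_add concat_vec_vscale concat_vec_zero form_kernel_def\<close>)
  moreover have "concat_vec k1 0 w \<in> ?S"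
  proof (rule form_kernel_subset_vimage[OF U2 linear_form_concat_right[OF \<phi>] S,
        where f = "concat_vec k1 0"])
    show "concat_vec k1 0 w' \<in> ?S" if "w' \<in> U2" "\<phi> (concat_vec k1 0 w') = 0" for w'
      using mem_S[OF closed_overD(1)[OF is_systemD(2)[OF U1(1)]] that(1) that(2)] .
  qed (use w in \<open>simp_all add: concat_vec_add concat_vec_vscale concat_vec_zero form_kernel_def\<close>)
  ultimately show ?thesis
    using closed_overD(2)[OF S] concat_vec_split[of k1 u w] by metis
qed

lemma form_kernel_subset_span_direct_sum:
  fixes K :: "'a::{field,finite} set"
  assumes K: "is_subfield K" and F: "card (UNIV :: 'a set) = card K ^ m"
    and U1: "is_system K n1 k1 U1" "is_cutting k1 U1"
      "is_evasive K k1 (int k1 - 1) (int n1 - int m - 1 + int t1) U1"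
    and U2: "is_system K n2 k2 U2" "is_cutting k2 U2"
      "is_evasive K k2 (int k2 - 1) (int n2 - int m - 1 + int t2) U2"
    and t: "t1 + t2 < m + 2"
    and \<phi>: "linear_form (k1 + k2) \<phi>"
  shows "form_kernel (k1 + k2) \<phi> \<subseteq> span_over UNIV (form_kernel (k1 + k2) \<phi> \<inter> direct_sum k1 U1 U2)"
    (is "_ \<subseteq> ?S")
proof
  fix h assume h: "h \<in> form_kernel (k1 + k2) \<phi>"
  define \<phi>1 where "\<phi>1 u = \<phi> (concat_vec k1 u 0)" for u
  define \<phi>2 where "\<phi>2 w = \<phi> (concat_vec k1 0 w)" for w
  have \<phi>1: "linear_form k1 \<phi>1" unfolding \<phi>1_def by (rule linear_form_concat_left[OF \<phi>])
  have \<phi>2: "linear_form k2 \<phi>2" unfolding \<phi>2_def by (rule linear_form_concat_right[OF \<phi>])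
  have mem_S: "concat_vec k1 u w \<in> ?S" if "u \<in> vecs k1" "w \<in> vecs k2" "\<phi>1 u = 0" "\<phi>2 w = 0" for u w
    using concat_vec_mem_span_kernel_cutting[OF U1(1,2) U2(1,2) \<phi>] that
    unfolding \<phi>1_def \<phi>2_def by blast
  obtain h1 h2 where h12: "h1 \<in> vecs k1" "h2 \<in> vecs k2" "h = concat_vec k1 h1 h2"
    using h unfolding form_kernel_def by (blast elim: vecs_add_cases)
  have sum0: "\<phi>1 h1 + \<phi>2 h2 = 0"
    using h linear_form_concat[OF \<phi> h12(1,2)] unfolding h12(3) form_kernel_def \<phi>1_def \<phi>2_def by simp
  show "h \<in> ?S"
  proof (cases "\<phi>1 h1 = 0")
    case True
    then show ?thesis using mem_S[OF h12(1,2)] sum0 h12(3) by simp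
  next
    case False
    then have "\<phi>2 h2 \<noteq> 0" using sum0 by auto
    then obtain u1 u2 where u: "u1 \<in> U1" "u2 \<in> U2" "\<phi>1 u1 \<noteq> 0" "\<phi>1 u1 + \<phi>2 u2 = 0"
      using exists_form_collision[OF K U1(1) U2(1) \<phi>1 \<phi>2]
        card_UNIV_less_card_images[OF K F U1(1,3) U2(1,3) t \<phi>1 h12(1) False \<phi>2 h12(2)] by blast
    have u_vecs: "u1 \<in> vecs k1" "u2 \<in> vecs k2"
      using u(1,2) is_systemD(1)[OF U1(1)] is_systemD(1)[OF U2(1)] by blast+
    have opposite: "\<phi>2 u2 = - \<phi>1 u1" "\<phi>2 h2 = - \<phi>1 h1"
      using u(4) sum0 by (simp_all add: eq_neg_iff_add_eq_0 add.commute)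
    \<comment> \<open>subtracting c (u1, u2) from h kills its first component under \<phi>1\<close>
    define c where "c = \<phi>1 h1 / \<phi>1 u1"
    have killed: "\<phi>1 (h1 - vscale c u1) = 0" "\<phi>2 (h2 - vscale c u2) = 0"
      using u(3) opposite
      by (simp_all add: linear_form_diff[OF \<phi>1] linear_form_diff[OF \<phi>2] linear_form_vscale[OF \<phi>1]
          linear_form_vscale[OF \<phi>2] vecs_vscale h12(1,2) u_vecs c_def field_simps)
    define h' where "h' = concat_vec k1 (h1 - vscale c u1) (h2 - vscale c u2)"
    have "h' \<in> ?S"
      unfolding h'_def by (intro mem_S vecs_diff vecs_vscale h12(1,2) u_vecs killed)
    moreover have "concat_vec k1 u1 u2 \<in> ?S"
      using concat_vec_mem_span_kernel[OF is_systemD(1)[OF U1(1)] is_systemD(1)[OF U2(1)] u(1,2)]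
        linear_form_concat[OF \<phi> u_vecs] u(4) unfolding \<phi>1_def \<phi>2_def by simp
    ultimately have "h' + vscale c (concat_vec k1 u1 u2) \<in> ?S"
      using closed_overD(2,3)[OF closed_span_over[OF is_subfield_UNIV]] by blast
    moreover have "h' + vscale c (concat_vec k1 u1 u2) = h"
      unfolding h'_def h12(3) by (simp add: concat_vec_def fun_eq_iff)
    ultimately show ?thesis by simp
  qed
qed

lemma is_cutting_direct_sum:
  fixes K :: "'a::{field,finite} set"
  assumes K: "is_subfield K" and F: "card (UNIV :: 'a set) = card K ^ m"
    and U1: "is_system K n1 k1 U1" "is_cutting k1 U1"
      "is_evasive K k1 (int k1 - 1) (int n1 - int m - 1 + int t1) U1"
    and U2: "is_system K n2 k2 U2" "is_cutting k2 U2"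
      "is_evasive K k2 (int k2 - 1) (int n2 - int m - 1 + int t2) U2"
    and t: "t1 + t2 < m + 2"
  shows "is_cutting (k1 + k2) (direct_sum k1 U1 U2)"
  unfolding is_cutting_def
proof (intro allI impI)
  fix H :: "(nat \<Rightarrow> 'a) set" assume "is_hyperplane (k1 + k2) H"
  then obtain \<phi> where \<phi>: "linear_form (k1 + k2) \<phi>" and H: "H = form_kernel (k1 + k2) \<phi>"
    by (rule hyperplane_eq_form_kernel)
  have "span_over UNIV (H \<inter> direct_sum k1 U1 U2) \<subseteq> H"
    unfolding H by (rule span_over_least[OF closed_over_form_kernel[OF \<phi>]]) blast
  moreover have "H \<subseteq> span_over UNIV (H \<inter> direct_sum k1 U1 U2)"
    unfolding H by (rule form_kernel_subset_span_direct_sum[OF K F U1 U2 t \<phi>])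
  ultimately show "span_over UNIV (H \<inter> direct_sum k1 U1 U2) = H" by blast
qed

theorem proposition3p8:
  fixes K :: "'a::{field,finite} set"
    and q m n1 n2 k1 k2 t1 t2 :: nat
    and U1 U2 :: "(nat \<Rightarrow> 'a) set"
  assumes "\<exists>p e. prime p \<and> e > 0 \<and> q = p ^ e"
    and "m > 0"
    and "is_subfield K" and "card K = q" and "card (UNIV :: 'a set) = q ^ m"
    and "is_system K n1 k1 U1" and "is_cutting k1 U1"
    and "is_evasive K k1 (int k1 - 1) (int n1 - int m - 1 + int t1) U1"
    and "is_system K n2 k2 U2" and "is_cutting k2 U2"
    and "is_evasive K k2 (int k2 - 1) (int n2 - int m - 1 + int t2) U2"
    and "t1 + t2 < m + 2"
  shows "is_system K (n1 + n2) (k1 + k2) (direct_sum k1 U1 U2)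
       \<and> is_cutting (k1 + k2) (direct_sum k1 U1 U2)"
proof
  show "is_system K (n1 + n2) (k1 + k2) (direct_sum k1 U1 U2)"
    by (rule is_system_direct_sum[OF assms(3,6,9)])
  have "card (UNIV :: 'a set) = card K ^ m" using assms(4,5) by simp
  then show "is_cutting (k1 + k2) (direct_sum k1 U1 U2)"
    by (rule is_cutting_direct_sum[OF assms(3) _ assms(6-12)])
qed

end
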